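(* Let $X$ be an idempotent unital commutative semiring whose intrinsic order is linear, i.e. $x\le y$ or $y\le x$ for all $x,y\in X$. Then $X$ is Frobenius.
   Context: A semiring $(X,+,0,\cdot)$: $(X,+,0)$ commutative monoid, $(X,\cdot)$ semigroup, distributivity, $0$ absorbing. Idempotent: $x+x=x$ for all $x$. Intrinsic order: $a\le b$ iff $a+x=b$ for some $x\in X$. $X$ is Frobenius if $(x+y)^n=x^n+y^n$ for all $x,y\in X$ and all integers $n\ge1$. *)

theory Defs
  imports Main
begin

text \<open>Commutative unital semirings are modelled by the sort
  {comm_semiring_0, comm_monoid_mult} (so 0 = 1 is not excluded).\<close>

definition idempotent_semiring :: "'a::{comm_semiring_0, comm_monoid_mult} itself \<Rightarrow> bool" where
  "idempotent_semiring _ \<longleftrightarrow> (\<forall>x::'a. x + x = x)"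

definition intrinsic_le :: "'a::comm_monoid_add \<Rightarrow> 'a \<Rightarrow> bool" where
  "intrinsic_le a b \<longleftrightarrow> (\<exists>x. a + x = b)"

definition frobenius :: "'a::{comm_semiring_0, comm_monoid_mult} itself \<Rightarrow> bool" where
  "frobenius _ \<longleftrightarrow> (\<forall>(x::'a) y (n::nat). n \<ge> 1 \<longrightarrow> (x + y) ^ n = x ^ n + y ^ n)"

end

theory Submission
  imports Defs
begin

text \<open>In an idempotent semiring the intrinsic order is absorption: \<open>x \<le> y\<close> iff \<open>x + y = y\<close>.
  Powers are monotone for this order, since \<open>x \<le> y\<close> gives \<open>x\<^sup>n \<le> x\<^sup>n\<^sup>-\<^sup>1 y \<le> y\<^sup>n\<close> by
  distributivity. So if \<open>x \<le> y\<close>, both \<open>(x + y)\<^sup>n\<close> and \<open>x\<^sup>n + y\<^sup>n\<close> equal \<open>y\<^sup>n\<close>; linearity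
  of the order means every pair is of this kind.\<close>

lemma intrinsic_le_iff_add_eq:
  fixes x y :: "'a::comm_monoid_add"
  assumes idem: "\<And>z::'a. z + z = z"
  shows "intrinsic_le x y \<longleftrightarrow> x + y = y"
proof
  assume "intrinsic_le x y"
  then obtain z where z: "x + z = y" unfolding intrinsic_le_def by blast
  have "x + y = (x + x) + z" using z by (simp add: add.assoc)
  then show "x + y = y" using idem z by simp
qed (auto simp: intrinsic_le_def)

lemma power_add_power_absorb:
  fixes x y :: "'a::{comm_semiring_0, comm_monoid_mult}"
  assumes idem: "\<And>z::'a. z + z = z" and xy: "x + y = y"
  shows "x ^ n + y ^ n = y ^ n"
proof (induction n)
  case 0
  then show ?case using idem by simp
next
  case (Suc n)
  have left: "x * x ^ n + x * y ^ n = x * y ^ n"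
    using Suc by (metis distrib_left)
  have right: "x * y ^ n + y * y ^ n = y * y ^ n"
    using xy by (metis distrib_right)
  have "x * x ^ n + y * y ^ n = (x * x ^ n + x * y ^ n) + y * y ^ n"
    using right by (simp add: add.assoc)
  also have "\<dots> = y * y ^ n"
    using left right by simp
  finally show ?case by simp
qed

lemma power_add_eq_add_power_if_absorb:
  fixes x y :: "'a::{comm_semiring_0, comm_monoid_mult}"
  assumes idem: "\<And>z::'a. z + z = z" and xy: "x + y = y"
  shows "(x + y) ^ n = x ^ n + y ^ n"
  using power_add_power_absorb[OF idem xy] xy by simp

theorem proposition3p2:
  assumes "idempotent_semiring TYPE('a::{comm_semiring_0, comm_monoid_mult})"
    and "\<forall>x y::'a. intrinsic_le x y \<or> intrinsic_le y x"
  shows "frobenius TYPE('a)"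
  unfolding frobenius_def
proof (intro allI impI)
  fix x y :: 'a and n :: nat
  have idem: "\<And>z::'a. z + z = z"
    using assms(1) unfolding idempotent_semiring_def by blast
  have "x + y = y \<or> y + x = x"
    using assms(2) intrinsic_le_iff_add_eq[OF idem] by blast
  then show "(x + y) ^ n = x ^ n + y ^ n"
    using power_add_eq_add_power_if_absorb[OF idem, of x y n]
          power_add_eq_add_power_if_absorb[OF idem, of y x n]
    by (auto simp: add.commute)
qed

end
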